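(* $\liminf_{n\to\infty}D(n)=\frac12$. Consequently, for every real $u$ with $0\le u<\frac12$, the set $\mathcal{N}(u)=\{n\ge1: D(n)>u\}$ contains all but finitely many positive integers; in particular it has natural density and logarithmic density both equal to $1$.
   Context: A subset $S\subseteq \mathbb{Z}/n\mathbb{Z}$ is called product-free if there are no $a,b,c\in S$ (not necessarily distinct) with $ab\equiv c\pmod n$. For a positive integer $n$, $D(n)$ denotes the maximum of $|S|/n$ over all product-free subsets $S$ of $\mathbb{Z}/n\mathbb{Z}$. *)

theory Defs
  imports Complex_Main "HOL-Library.Extended_Real" "HOL-Library.Liminf_Limsup"
begin

text \<open>Residues of Z/nZ are represented by {0..<n}; a b \<equiv> c (mod n) for residues
  a, b, c means (a * b) mod n = c.\<close>
definition product_free :: "nat \<Rightarrow> nat set \<Rightarrow> bool" where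
  "product_free n S \<longleftrightarrow> S \<subseteq> {0..<n} \<and>
     \<not> (\<exists>a\<in>S. \<exists>b\<in>S. \<exists>c\<in>S. (a * b) mod n = c mod n)"

definition D :: "nat \<Rightarrow> real" where
  "D n = Max ((\<lambda>S. real (card S) / real n) ` {S. product_free n S})"

definition has_natural_density :: "nat set \<Rightarrow> real \<Rightarrow> bool" where
  "has_natural_density A d \<longleftrightarrow>
     (\<lambda>x. real (card (A \<inter> {1..x})) / real x) \<longlonglongrightarrow> d"

definition has_log_density :: "nat set \<Rightarrow> real \<Rightarrow> bool" where
  "has_log_density A d \<longleftrightarrow>
     (\<lambda>x. (\<Sum>k\<in>A \<inter> {1..x}. 1 / real k) / ln (real x)) \<longlonglongrightarrow> d"

end

theory Submission
  imports Defs "HOL-Number_Theory.Number_Theory" "HOL-Analysis.Harmonic_Numbers"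
begin

(* Upper bound: for a prime p, a nonzero element s of a product-free set S in Z/pZ
   maps S injectively, by multiplication, into the nonzero residues outside S, so
   |S| \<le> (p - 1)/2 and D(p) \<le> 1/2; since there are infinitely many primes,
   liminf D(n) \<le> 1/2.

   Lower bound: a product-free set modulo q lifts to one modulo any multiple n of q
   with the same density, so D is monotone along divisibility.  For a prime power
   q = p^a \<ge> 3 we build a product-free set of density \<ge> 1/2 - 1/q out of a
   "half character" (quadratic non-residues for odd p, the class 3 mod 4 for p = 2):
   all x = p^j u with u in the bad class and j not too large.  Every n > K! has a
   prime-power divisor exceeding K, hence D(n) \<ge> 1/2 - 1/K for all large n.

   Finally a set of positive integers with finite complement has natural and
   logarithmic density 1, which gives the density statements. *)

lemma product_free_finite: "finite {S. product_free n S}"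
proof -
  have "{S. product_free n S} \<subseteq> Pow {0..<n}" by (auto simp: product_free_def)
  thus ?thesis by (rule finite_subset) simp
qed

lemma product_free_empty: "product_free n {}"
  by (simp add: product_free_def)

lemma density_le_D: "product_free n S \<Longrightarrow> real (card S) / real n \<le> D n"
  unfolding D_def by (rule Max_ge) (use product_free_finite in auto)

lemma D_attained: "\<exists>S. product_free n S \<and> D n = real (card S) / real n"
proof -
  have "D n \<in> (\<lambda>S. real (card S) / real n) ` {S. product_free n S}"
    unfolding D_def using product_free_finite product_free_empty by (intro Max_in) auto
  thus ?thesis by blast
qed

lemma D_le:
  assumes "\<And>S. product_free n S \<Longrightarrow> real (card S) / real n \<le> c"
  shows "D n \<le> c"
  using D_attained[of n] assms by auto

section \<open>The upper bound at primes\<close>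

lemma inj_on_mult_mod:
  fixes g q :: nat
  assumes "coprime g q"
  shows "inj_on (\<lambda>x. (g * x) mod q) {..<q}"
proof
  fix x y assume "x \<in> {..<q}" "y \<in> {..<q}" "(g * x) mod q = (g * y) mod q"
  moreover from this have "[x = y] (mod q)"
    using assms by (simp add: cong_def[symmetric] cong_mult_lcancel_nat)
  ultimately show "x = y" by (simp add: cong_def)
qed

text \<open>If s, x lie in a product-free set modulo p, then s x lies outside of it.  For a
  prime p and s \<noteq> 0 the map x \<mapsto> s x is injective and avoids 0, so S and s S are
  disjoint subsets of the p - 1 nonzero residues.\<close>
lemma product_free_prime_card:
  assumes p: "prime p" and pf: "product_free p S"
  shows "2 * card S \<le> p"
proof (cases "S = {}")
  case False
  then obtain s where s: "s \<in> S" by blast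
  have S_sub: "S \<subseteq> {..<p}" using pf by (auto simp: product_free_def)
  have no_rel: "(a * b) mod p \<noteq> c" if "a \<in> S" "b \<in> S" "c \<in> S" for a b c
  proof -
    have "c mod p = c" using that(3) S_sub by auto
    thus ?thesis using pf that unfolding product_free_def by metis
  qed
  have "0 \<notin> S" using no_rel[of 0 0 0] by auto
  hence S_units: "S \<subseteq> {1..<p}" using S_sub by (auto simp: Suc_le_eq intro: gr0I)
  have not_dvd: "\<not> p dvd x" if "x \<in> S" for x
  proof
    assume "p dvd x"
    moreover have "0 < x" "x < p" using S_units that by auto
    ultimately show False by (auto dest: dvd_imp_le)
  qed
  have s_unit: "coprime s p"
    using prime_imp_coprime[OF p not_dvd[OF s]] by (simp add: coprime_commute)
  define f where "f x = (s * x) mod p" for x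
  have inj: "inj_on f S"
    using inj_on_mult_mod[OF s_unit] S_sub unfolding f_def by (rule inj_on_subset)
  have image: "f ` S \<subseteq> {1..<p}"
  proof
    fix y assume "y \<in> f ` S"
    then obtain x where x: "x \<in> S" "y = f x" by blast
    have "\<not> p dvd s * x" using p not_dvd[OF s] not_dvd[OF x(1)] by (simp add: prime_dvd_mult_iff)
    hence "y \<noteq> 0" using x by (simp add: f_def mod_eq_0_iff_dvd)
    moreover have "y < p" using x p by (simp add: f_def prime_gt_0_nat)
    ultimately show "y \<in> {1..<p}" by auto
  qed
  have disjoint: "S \<inter> f ` S = {}" using no_rel s by (auto simp: f_def)
  have "card S + card S = card (S \<union> f ` S)"
    using disjoint inj finite_subset[OF S_units]
    by (subst card_Un_disjoint) (auto simp: card_image)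
  also have "\<dots> \<le> card {1..<p}" by (rule card_mono) (use S_units image in auto)
  finally show ?thesis by simp
qed simp

lemma D_prime_le_half:
  assumes p: "prime p"
  shows "D p \<le> 1/2"
proof (rule D_le)
  fix S assume "product_free p S"
  hence "2 * card S \<le> p" by (rule product_free_prime_card[OF p])
  hence "2 * real (card S) \<le> real p" by (metis of_nat_le_iff of_nat_mult of_nat_numeral)
  thus "real (card S) / real p \<le> 1/2" using prime_gt_0_nat[OF p] by (simp add: field_simps)
qed

section \<open>Monotonicity of D along divisibility\<close>

lemma card_mod_preimage:
  fixes q m :: nat
  assumes q: "0 < q" and S0: "S0 \<subseteq> {..<q}"
  shows "card {x. x < q * m \<and> x mod q \<in> S0} = card S0 * m"
proof -
  let ?h = "\<lambda>(y, t). y + q * t"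
  have inj: "inj_on ?h (S0 \<times> {..<m})"
  proof (rule inj_onI, clarsimp)
    fix y t y' t' assume h: "y \<in> S0" "y' \<in> S0" "y + q * t = y' + q * t'"
    hence "y < q" "y' < q" using S0 by auto
    hence "y = (y + q * t) mod q" "y' = (y' + q * t') mod q" by simp_all
    hence "y = y'" using h(3) by simp
    thus "y = y' \<and> t = t'" using h(3) q by simp
  qed
  have image: "?h ` (S0 \<times> {..<m}) = {x. x < q * m \<and> x mod q \<in> S0}"
  proof safe
    fix y t assume h: "y \<in> S0" "t < m"
    have "y + q * t < q * (t + 1)" using h S0 by auto
    also have "\<dots> \<le> q * m" using h by (intro mult_le_mono2) simp
    finally show "y + q * t < q * m" .
    show "(y + q * t) mod q \<in> S0" using h S0 by auto
  next
    fix x assume x: "x < q * m" "x mod q \<in> S0"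
    have "x div q < m" using x q by (simp add: less_mult_imp_div_less mult.commute)
    thus "x \<in> ?h ` (S0 \<times> {..<m})" using x
      by (intro image_eqI[of _ _ "(x mod q, x div q)"]) auto
  qed
  have "card {x. x < q * m \<and> x mod q \<in> S0} = card (S0 \<times> {..<m})"
    using card_image[OF inj] image by simp
  thus ?thesis by (simp add: card_cartesian_product)
qed

text \<open>Reduction modulo a divisor q of n is a ring homomorphism, so the preimage of a
  product-free set modulo q is product-free modulo n.\<close>
lemma product_free_mod_preimage:
  assumes qn: "q dvd n" and pf: "product_free q S0"
  shows "product_free n {x. x < n \<and> x mod q \<in> S0}"
  unfolding product_free_def
proof safe
  fix a b c assume abc: "a < n" "a mod q \<in> S0" "b < n" "b mod q \<in> S0" "c < n" "c mod q \<in> S0"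
    "(a * b) mod n = c mod n"
  have "(a * b) mod q = c mod q" using abc(7) qn by (metis mod_mod_cancel)
  hence "((a mod q) * (b mod q)) mod q = (c mod q) mod q" by (simp add: mod_mult_eq)
  thus False using pf abc(2,4,6) unfolding product_free_def by blast
qed auto

lemma D_mono_dvd:
  assumes qn: "q dvd n" and n: "0 < n"
  shows "D q \<le> D n"
proof -
  obtain S0 where pf: "product_free q S0" and DS0: "D q = real (card S0) / real q"
    using D_attained by blast
  obtain m where m: "n = q * m" using qn by blast
  have q: "0 < q" and "0 < m" using m n by auto
  have "card {x. x < n \<and> x mod q \<in> S0} = card S0 * m"
    unfolding m using pf by (intro card_mod_preimage[OF q]) (auto simp: product_free_def)
  hence "D q = real (card {x. x < n \<and> x mod q \<in> S0}) / real n"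
    using DS0 m \<open>0 < m\<close> by (simp add: field_simps)
  also have "\<dots> \<le> D n" by (rule density_le_D[OF product_free_mod_preimage[OF qn pf]])
  finally show ?thesis .
qed

section \<open>Prime powers: a product-free set from a half character\<close>

lemma power_Suc_dvd_cancel:
  fixes p k w :: nat
  assumes "0 < p" and "p ^ Suc k dvd p ^ k * w"
  shows "p dvd w"
  using assms by (simp add: mult.commute)

lemma card_multiples_below:
  fixes d m :: nat
  assumes "0 < d"
  shows "card {x. x < d * m \<and> d dvd x} = m"
proof -
  have "{x. x < d * m \<and> d dvd x} = (\<lambda>t. d * t) ` {..<m}" using assms by (auto elim!: dvdE)
  thus ?thesis using assms by (simp add: card_image inj_on_def)
qed

text \<open>A half character modulo p^e: a class of residues prime to p, depending only on the
  residue modulo p^e, containing no product of two of its members, and into which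
  multiplication by a fixed unit g moves every other residue prime to p.  Quadratic
  non-residues (odd p, e = 1) and the class 3 mod 4 (p = 2, e = 2) are examples.\<close>
locale half_character =
  fixes p e g :: nat and bad :: "nat \<Rightarrow> bool"
  assumes prime_p: "prime p" and e_pos: "1 \<le> e"
    and bad_coprime: "\<And>u. bad u \<Longrightarrow> \<not> p dvd u"
    and bad_cong: "\<And>u w. [u = w] (mod p ^ e) \<Longrightarrow> bad u \<longleftrightarrow> bad w"
    and bad_mult: "\<And>u v. bad u \<Longrightarrow> bad v \<Longrightarrow> \<not> bad (u * v)"
    and g_coprime: "\<not> p dvd g"
    and g_flip: "\<And>u. \<not> p dvd u \<Longrightarrow> \<not> bad u \<Longrightarrow> bad (g * u)"
begin

definition bad_set :: "nat \<Rightarrow> nat set" where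
  "bad_set a = {x. x < p ^ a \<and> (\<exists>j u. j + e \<le> a \<and> x = p ^ j * u \<and> bad u)}"

lemma p_pos: "0 < p"
  using prime_gt_0_nat[OF prime_p] .

lemma bad_set_finite: "finite (bad_set a)"
  by (rule finite_subset[of _ "{..<p ^ a}"]) (auto simp: bad_set_def)

text \<open>Different valuations s \<noteq> k are told apart by
  the power p^(min s k + 1), which divides p^a; for s = k the congruence descends to
  u v \<equiv> w (mod p^e), so u v would be bad.\<close>
lemma no_bad_relation:
  assumes bad: "bad u" "bad v" "bad w" and ka: "k + e \<le> a"
    and rel: "[p ^ s * (u * v) = p ^ k * w] (mod p ^ a)"
  shows False
proof -
  have same_dvd: "d dvd p ^ s * (u * v) \<longleftrightarrow> d dvd p ^ k * w" if "d dvd p ^ a" for d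
    using rel that by (meson cong_dvd_iff cong_dvd_modulus_nat)
  consider "k < s" | "s < k" | "s = k" by linarith
  then show False
  proof cases
    case 1
    have "p ^ Suc k dvd p ^ s * (u * v)" using 1 by (intro dvd_mult2 le_imp_power_dvd) simp
    moreover have "p ^ Suc k dvd p ^ a" using ka e_pos by (intro le_imp_power_dvd) simp
    ultimately have "p ^ Suc k dvd p ^ k * w" using same_dvd by blast
    thus False using power_Suc_dvd_cancel[OF p_pos] bad_coprime[OF bad(3)] by blast
  next
    case 2
    have "p ^ Suc s dvd p ^ k * w" using 2 by (intro dvd_mult2 le_imp_power_dvd) simp
    moreover have "p ^ Suc s dvd p ^ a" using ka 2 by (intro le_imp_power_dvd) simp
    ultimately have "p ^ Suc s dvd p ^ s * (u * v)" using same_dvd by blast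
    hence "p dvd u * v" by (rule power_Suc_dvd_cancel[OF p_pos])
    thus False using prime_p bad_coprime[OF bad(1)] bad_coprime[OF bad(2)]
      by (simp add: prime_dvd_mult_iff)
  next
    case 3
    have pa: "p ^ a = p ^ k * p ^ (a - k)" using ka by (simp flip: power_add)
    have "p ^ k * ((u * v) mod p ^ (a - k)) = p ^ k * (w mod p ^ (a - k))"
      using rel 3 unfolding cong_def pa by (simp only: mod_mult_mult1)
    hence "[u * v = w] (mod p ^ (a - k))" using p_pos by (simp add: cong_def)
    moreover have "p ^ e dvd p ^ (a - k)" using ka by (intro le_imp_power_dvd) simp
    ultimately have "[u * v = w] (mod p ^ e)" by (rule cong_dvd_modulus_nat)
    hence "bad (u * v)" using bad_cong bad(3) by blast
    thus False using bad_mult bad(1,2) by blast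
  qed
qed

lemma bad_set_product_free: "product_free (p ^ a) (bad_set a)"
  unfolding product_free_def
proof safe
  fix x y z assume h: "x \<in> bad_set a" "y \<in> bad_set a" "z \<in> bad_set a"
    "(x * y) mod p ^ a = z mod p ^ a"
  from h(1) obtain i u where u: "x = p ^ i * u" "bad u" by (auto simp: bad_set_def)
  from h(2) obtain j v where v: "y = p ^ j * v" "bad v" by (auto simp: bad_set_def)
  from h(3) obtain k w where w: "k + e \<le> a" "z = p ^ k * w" "bad w" by (auto simp: bad_set_def)
  have "x * y = p ^ (i + j) * (u * v)" using u v by (simp add: power_add algebra_simps)
  hence "[p ^ (i + j) * (u * v) = p ^ k * w] (mod p ^ a)" using h(4) w by (simp add: cong_def)
  thus False using no_bad_relation[OF u(2) v(2) w(3) w(1)] by blast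
qed (auto simp: bad_set_def)

lemma flip_into_bad_set:
  assumes ea: "e \<le> a" and x: "x < p ^ a" "\<not> p ^ (a - e + 1) dvd x" "x \<notin> bad_set a"
  shows "(g * x) mod p ^ a \<in> bad_set a"
proof -
  have "x \<noteq> 0" using x(2) by (metis dvd_0_right)
  define j where "j = multiplicity p x"
  obtain u where xu: "x = p ^ j * u" and u: "\<not> p dvd u"
    using multiplicity_decompose'[OF \<open>x \<noteq> 0\<close>, of p] prime_gt_1_nat[OF prime_p]
    unfolding j_def by (metis nat_dvd_1_iff_1 less_irrefl)
  have j: "j + e \<le> a"
  proof (rule ccontr)
    assume "\<not> j + e \<le> a"
    hence "p ^ (a - e + 1) dvd p ^ j" using ea by (intro le_imp_power_dvd) simp
    moreover have "p ^ j dvd x" using xu by simp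
    ultimately show False using x(2) dvd_trans by blast
  qed
  have "\<not> bad u" using x(1,3) xu j by (auto simp: bad_set_def)
  hence bad_gu: "bad (g * u)" using g_flip u by blast
  have dvd_e: "p ^ e dvd p ^ (a - j)" using j by (intro le_imp_power_dvd) simp
  have "[(g * u) mod p ^ (a - j) = g * u] (mod p ^ (a - j))" by (simp add: cong_def)
  hence "[(g * u) mod p ^ (a - j) = g * u] (mod p ^ e)" using dvd_e by (rule cong_dvd_modulus_nat)
  hence bad_r: "bad ((g * u) mod p ^ (a - j))" using bad_cong bad_gu by blast
  have pa: "p ^ a = p ^ j * p ^ (a - j)" using j by (simp flip: power_add)
  have "g * x = p ^ j * (g * u)" using xu by simp
  hence gx: "(g * x) mod p ^ a = p ^ j * ((g * u) mod p ^ (a - j))"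
    unfolding pa by (simp only: mod_mult_mult1)
  have "(g * x) mod p ^ a < p ^ a" using p_pos by simp
  thus ?thesis unfolding bad_set_def using j gx bad_r by blast
qed

text \<open>Counting: the residues of valuation at most a - e number p^a - p^(e-1); they contain
  bad_set a, and multiplication by g injects the rest of them into bad_set a.\<close>
lemma bad_set_card:
  assumes ea: "e \<le> a"
  shows "p ^ a - p ^ (e - 1) \<le> 2 * card (bad_set a)"
proof -
  define b where "b = a - e + 1"
  define N where "N = {x. x < p ^ a \<and> \<not> p ^ b dvd x}"
  define B where "B = bad_set a"
  have "a = b + (e - 1)" using ea e_pos by (simp add: b_def)
  hence pa: "p ^ a = p ^ b * p ^ (e - 1)" by (metis power_add)
  define M where "M = {x. x < p ^ b * p ^ (e - 1) \<and> p ^ b dvd x}"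
  have M_sub: "M \<subseteq> {..<p ^ a}" by (auto simp: M_def pa)
  have "card M = p ^ (e - 1)" unfolding M_def using p_pos by (intro card_multiples_below) simp
  moreover have "N = {..<p ^ a} - M" unfolding N_def M_def pa by auto
  ultimately have card_N: "card N = p ^ a - p ^ (e - 1)"
    using M_sub finite_subset[OF M_sub] by (simp add: card_Diff_subset)
  have BN: "B \<subseteq> N"
  proof
    fix x assume "x \<in> B"
    then obtain j u where x: "x < p ^ a" "j + e \<le> a" "x = p ^ j * u" "bad u"
      by (auto simp: B_def bad_set_def)
    have "\<not> p ^ b dvd x"
    proof
      assume "p ^ b dvd x"
      moreover have "p ^ Suc j dvd p ^ b" using x(2) by (intro le_imp_power_dvd) (simp add: b_def)
      ultimately have "p ^ Suc j dvd p ^ j * u" using x(3) dvd_trans by blast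
      thus False using power_Suc_dvd_cancel[OF p_pos] bad_coprime[OF x(4)] by blast
    qed
    thus "x \<in> N" using x by (simp add: N_def)
  qed
  have "coprime g (p ^ a)" using prime_imp_coprime[OF prime_p g_coprime] by (simp add: coprime_commute)
  hence "inj_on (\<lambda>x. (g * x) mod p ^ a) (N - B)"
    by (rule inj_on_subset[OF inj_on_mult_mod]) (auto simp: N_def)
  moreover have "(\<lambda>x. (g * x) mod p ^ a) ` (N - B) \<subseteq> B"
    using flip_into_bad_set[OF ea] by (auto simp: N_def B_def b_def)
  ultimately have "card (N - B) \<le> card B" using bad_set_finite by (intro card_inj_on_le) (auto simp: B_def)
  moreover have "card N = card (N - B) + card B"
    using BN bad_set_finite card_mono[OF _ BN] by (simp add: B_def N_def card_Diff_subset)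
  ultimately show ?thesis using card_N unfolding B_def by linarith
qed

lemma D_lower_bound:
  assumes ea: "e \<le> a" and small: "p ^ (e - 1) \<le> 2"
  shows "1/2 - 1 / real (p ^ a) \<le> D (p ^ a)"
proof -
  define q where "q = real (p ^ a)"
  define c where "c = real (card (bad_set a))"
  have q: "0 < q" using p_pos by (simp add: q_def)
  have count: "q - 2 \<le> 2 * c" using bad_set_card[OF ea] small unfolding q_def c_def by linarith
  have "1/2 - 1 / q = (q - 2) / (2 * q)" using q by (simp add: field_simps)
  also have "\<dots> \<le> (2 * c) / (2 * q)" using count q by (intro divide_right_mono) auto
  also have "\<dots> = real (card (bad_set a)) / real (p ^ a)" by (simp add: q_def c_def)
  also have "\<dots> \<le> D (p ^ a)" by (rule density_le_D[OF bad_set_product_free])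
  finally show ?thesis unfolding q_def .
qed

end

lemma square_eq_one_mod_prime:
  fixes x :: int and p :: nat
  assumes p: "prime p" and sq: "[x ^ 2 = 1] (mod int p)"
  shows "[x = 1] (mod int p) \<or> [x = -1] (mod int p)"
proof -
  have "int p dvd (x - 1) * (x + 1)"
    using sq by (simp add: cong_iff_dvd_diff cong_sym_eq algebra_simps power2_eq_square)
  hence "int p dvd x - 1 \<or> int p dvd x + 1" using p by (simp add: prime_dvd_mult_iff)
  thus ?thesis by (auto simp: cong_iff_dvd_diff)
qed

text \<open>Odd primes: with h = (p - 1)/2, Fermat's theorem gives u^h \<equiv> \<plusminus>1 (mod p) for u prime
  to p; the class u^h \<equiv> -1 of quadratic non-residues is a half character modulo p, and a
  primitive root serves as the flipping unit.\<close>
lemma odd_prime_half_character: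
  assumes p: "prime p" and odd: "odd p"
  obtains g where "half_character p 1 g (\<lambda>u. [int u ^ ((p - 1) div 2) = -1] (mod int p))"
proof -
  define h where "h = (p - 1) div 2"
  define bad where "bad u \<longleftrightarrow> [int u ^ h = -1] (mod int p)" for u :: nat
  have p3: "3 \<le> p" using prime_ge_2_nat[OF p] odd by (cases "p = 2") auto
  have h: "1 \<le> h" "h < p - 1" "p - 1 = 2 * h" using p3 odd by (auto simp: h_def elim!: oddE)
  have one_ne: "\<not> [(1::int) = -1] (mod int p)"
  proof
    assume "[(1::int) = -1] (mod int p)"
    hence "int p dvd 2" by (simp add: cong_iff_dvd_diff)
    thus False using p3 by (auto dest: zdvd_imp_le)
  qed
  have pm1: "[int u ^ h = 1] (mod int p) \<or> bad u" if "\<not> p dvd u" for u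
  proof -
    have "[u ^ (p - 1) = 1] (mod p)" by (rule fermat_theorem[OF p that])
    hence "[(int u ^ h) ^ 2 = 1] (mod int p)"
      unfolding h(3) by (metis cong_int_iff of_nat_1 of_nat_power power_mult mult.commute)
    thus ?thesis unfolding bad_def by (rule square_eq_one_mod_prime[OF p])
  qed
  obtain g where "residue_primroot p g"
    using prime_primitive_root_exists[OF _ p] prime_gt_1_nat[OF p] by blast
  hence g_coprime: "\<not> p dvd g" and ord_g: "ord p g = p - 1"
    using p by (auto simp: residue_primroot_def totient_prime coprime_absorb_left not_prime_unit
        dest: prime_imp_coprime)
  have "\<not> [g ^ h = 1] (mod p)"
  proof
    assume "[g ^ h = 1] (mod p)"
    hence "ord p g dvd h" by (simp add: ord_divides')
    thus False using ord_g h by (auto dest: dvd_imp_le)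
  qed
  hence bad_g: "bad g" using pm1[OF g_coprime] by (metis cong_int_iff of_nat_1 of_nat_power)
  have "half_character p 1 g bad"
  proof
    show "\<not> p dvd u" if "bad u" for u
    proof
      assume "p dvd u"
      hence "int p dvd int u" by simp
      also have "int u dvd int u ^ h" using h(1) by simp
      finally have "[int u ^ h = 0] (mod int p)" by (simp add: cong_0_iff)
      hence "[(0::int) = -1] (mod int p)" using that unfolding bad_def by (metis cong_sym cong_trans)
      thus False using p3 by (simp add: cong_iff_dvd_diff)
    qed
    show "bad u \<longleftrightarrow> bad w" if "[u = w] (mod p ^ 1)" for u w
    proof -
      have "[int u ^ h = int w ^ h] (mod int p)" using that by (simp add: cong_int_iff cong_pow)
      thus ?thesis unfolding bad_def by (meson cong_sym cong_trans)
    qed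
    show "\<not> bad (u * v)" if "bad u" "bad v" for u v
    proof
      have "[int u ^ h * int v ^ h = (-1) * (-1)] (mod int p)"
        using that unfolding bad_def by (rule cong_mult)
      hence "[int (u * v) ^ h = 1] (mod int p)" by (simp add: power_mult_distrib)
      moreover assume "bad (u * v)"
      ultimately show False using one_ne unfolding bad_def by (meson cong_sym cong_trans)
    qed
    show "bad (g * u)" if "\<not> p dvd u" "\<not> bad u" for u
    proof -
      have "[int g ^ h * int u ^ h = (-1) * 1] (mod int p)"
        using bad_g pm1[OF that(1)] that(2) unfolding bad_def by (intro cong_mult) auto
      thus ?thesis by (simp add: bad_def power_mult_distrib)
    qed
  qed (use p g_coprime in auto)
  thus ?thesis using that unfolding bad_def h_def by blast
qed

lemma two_half_character: "half_character 2 2 3 (\<lambda>u. u mod 4 = 3)"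
proof
  fix u v w :: nat
  show "\<not> 2 dvd u" if "u mod 4 = 3" using that by presburger
  show "u mod 4 = 3 \<longleftrightarrow> w mod 4 = 3" if "[u = w] (mod 2 ^ 2)" using that by (simp add: cong_def)
  show "(u * v) mod 4 \<noteq> 3" if "u mod 4 = 3" "v mod 4 = 3"
    using that by (simp add: mod_mult_eq[symmetric])
  show "(3 * u) mod 4 = 3" if "\<not> 2 dvd u" "u mod 4 \<noteq> 3"
  proof -
    have "u mod 4 = 1" using that by presburger
    thus ?thesis by (simp add: mod_mult_right_eq[symmetric])
  qed
qed auto

lemma D_prime_power_ge:
  assumes p: "prime p" and a: "1 \<le> a" and q3: "3 \<le> p ^ a"
  shows "1/2 - 1 / real (p ^ a) \<le> D (p ^ a)"
proof (cases "p = 2")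
  case True
  interpret half_character 2 2 3 "\<lambda>u. u mod 4 = 3" by (rule two_half_character)
  have "2 \<le> a" using q3 a True by (cases "a = 1") auto
  thus ?thesis using D_lower_bound[of a] True by simp
next
  case False
  hence "odd p" using p prime_ge_2_nat[OF p] by (intro prime_odd_nat) auto
  then obtain g where "half_character p 1 g (\<lambda>u. [int u ^ ((p - 1) div 2) = -1] (mod int p))"
    using odd_prime_half_character[OF p] by blast
  then interpret half_character p 1 g "\<lambda>u. [int u ^ ((p - 1) div 2) = -1] (mod int p)" .
  show ?thesis using D_lower_bound[OF a] by simp
qed

section \<open>The liminf\<close>

text \<open>If all prime-power components p^(v_p(n)) of n are at most Q, then n divides Q!; so
  every n > Q! has a prime-power component exceeding Q.\<close>
lemma large_prime_power_component:
  fixes n Q :: nat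
  assumes n: "fact Q < n"
  shows "\<exists>p. prime p \<and> Q < p ^ multiplicity p n"
proof (rule ccontr)
  assume "\<not> ?thesis"
  hence small: "p ^ multiplicity p n \<le> Q" if "prime p" for p using that by (auto simp: not_less)
  have "n dvd fact Q"
  proof (rule multiplicity_le_imp_dvd)
    show "n \<noteq> 0" using n by auto
    fix p :: nat assume p: "prime p"
    have "0 < p ^ multiplicity p n" using prime_gt_0_nat[OF p] by simp
    hence "p ^ multiplicity p n dvd fact Q" using small[OF p] by (intro dvd_fact) auto
    thus "multiplicity p n \<le> multiplicity p (fact Q)"
      using p by (subst (asm) power_dvd_iff_le_multiplicity) (auto simp: fact_nonzero)
  qed
  hence "n \<le> fact Q" by (intro dvd_imp_le) auto
  thus False using n by simp
qed

text \<open>Lower half of the main result: for r < 1/2 choose K \<ge> 3 with 1/K < 1/2 - r; every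
  n > K! has a prime-power divisor q > K, so D(n) \<ge> D(q) \<ge> 1/2 - 1/q > r.\<close>
lemma D_eventually_gt:
  assumes r: "r < 1/2"
  shows "eventually (\<lambda>n. r < D n) sequentially"
proof -
  obtain Q :: nat where "1 / (1/2 - r) < real Q" using reals_Archimedean2 by blast
  define K where "K = Q + 3"
  have K: "1 / real K < 1/2 - r"
    using r \<open>1 / (1/2 - r) < real Q\<close>
    by (auto simp: K_def divide_less_eq mult.commute intro: order.strict_trans2)
  show ?thesis unfolding eventually_sequentially
  proof (intro exI allI impI)
    fix n :: nat assume n: "Suc (fact K) \<le> n"
    then obtain p where p: "prime p" and big: "K < p ^ multiplicity p n"
      using large_prime_power_component[of K n] by auto
    define m where "m = multiplicity p n"
    have "1 \<le> m" using big by (cases m) (auto simp: m_def K_def)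
    have "real K < real (p ^ m)" using big by (simp only: m_def of_nat_less_iff)
    hence "1 / real (p ^ m) < 1 / real K" by (intro frac_less2) (auto simp: K_def)
    hence "r < 1/2 - 1 / real (p ^ m)" using K by linarith
    also have "\<dots> \<le> D (p ^ m)" using D_prime_power_ge[OF p \<open>1 \<le> m\<close>] big by (simp add: m_def K_def)
    also have "\<dots> \<le> D n" using n by (intro D_mono_dvd) (auto simp: m_def multiplicity_dvd)
    finally show "r < D n" .
  qed
qed

text \<open>D(p) \<le> 1/2 at the infinitely many primes p.\<close>
lemma liminf_D_le_half: "liminf (\<lambda>n. ereal (D n)) \<le> ereal (1/2)"
proof (rule Liminf_least)
  fix P assume "eventually P sequentially"
  then obtain N where N: "\<And>n. N \<le> n \<Longrightarrow> P n" by (auto simp: eventually_sequentially)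
  obtain p where p: "prime p" "N < p" using bigger_prime by blast
  have "ereal (D p) \<in> (\<lambda>n. ereal (D n)) ` Collect P" using N[of p] p by auto
  moreover have "ereal (D p) \<le> ereal (1/2)" using D_prime_le_half[OF p(1)] by simp
  ultimately show "Inf ((\<lambda>n. ereal (D n)) ` Collect P) \<le> ereal (1/2)" by (rule Inf_lower2)
qed

lemma liminf_D_ge_half: "ereal (1/2) \<le> liminf (\<lambda>n. ereal (D n))"
  unfolding le_Liminf_iff
proof (intro allI impI)
  fix y :: ereal assume y: "y < ereal (1/2)"
  show "eventually (\<lambda>n. y < ereal (D n)) sequentially"
  proof (cases y)
    case (real r)
    thus ?thesis using D_eventually_gt[of r] y by simp
  qed (use y in auto)
qed

section \<open>Densities of cofinite sets\<close>

text \<open>The harmonic numbers grow like ln x, up to a bounded error.\<close>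
lemma harm_shift_over_ln: "(\<lambda>x. (harm x - c) / ln (real x)) \<longlonglongrightarrow> (1::real)"
proof -
  have ln: "filterlim (\<lambda>x::nat. ln (real x)) at_top sequentially"
    by (rule filterlim_compose[OF ln_at_top filterlim_real_sequentially])
  have "(\<lambda>x. (harm x - ln (real x) - c) / ln (real x)) \<longlonglongrightarrow> (0::real)"
    by (rule tendsto_divide_0[OF tendsto_diff[OF euler_mascheroni_LIMSEQ tendsto_const]])
       (rule filterlim_at_top_imp_at_infinity[OF ln])
  hence "(\<lambda>x. 1 + (harm x - ln (real x) - c) / ln (real x)) \<longlonglongrightarrow> (1 + 0::real)"
    by (intro tendsto_add tendsto_const)
  moreover have "eventually (\<lambda>x. 1 + (harm x - ln (real x) - c) / ln (real x)
                   = (harm x - c) / ln (real x)) sequentially"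
    using eventually_ge_at_top[of 2] by eventually_elim (simp add: field_simps)
  ultimately show ?thesis by (simp add: tendsto_cong)
qed

text \<open>A set of positive integers missing only numbers below N has natural density 1:
  up to x it contains between x - N and x elements.\<close>
lemma cofinite_natural_density:
  assumes sub: "{1..} - A \<subseteq> {..<N}"
  shows "has_natural_density A 1"
  unfolding has_natural_density_def
proof (rule tendsto_sandwich[of "\<lambda>x. 1 - real N / real x" _ _ "\<lambda>x. 1"])
  have lower: "x \<le> card (A \<inter> {1..x}) + N" for x
  proof -
    have "card {1..x} \<le> card ((A \<inter> {1..x}) \<union> {..<N})" using sub by (intro card_mono) auto
    also have "\<dots> \<le> card (A \<inter> {1..x}) + N" using card_Un_le[of _ "{..<N}"] by simp
    finally show ?thesis by simp
  qed
  show "eventually (\<lambda>x. 1 - real N / real x \<le> real (card (A \<inter> {1..x})) / real x) sequentially"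
    using eventually_ge_at_top[of 1]
  proof eventually_elim
    case (elim x)
    have x: "0 < real x" using elim by simp
    have "1 - real N / real x = (real x - real N) / real x" using x by (simp add: field_simps)
    also have "\<dots> \<le> real (card (A \<inter> {1..x})) / real x"
      using lower[of x] x by (intro divide_right_mono) auto
    finally show ?case .
  qed
  show "eventually (\<lambda>x. real (card (A \<inter> {1..x})) / real x \<le> 1) sequentially"
    using eventually_ge_at_top[of 1]
  proof eventually_elim
    case (elim x)
    have "card (A \<inter> {1..x}) \<le> x" using card_mono[of "{1..x}" "A \<inter> {1..x}"] by simp
    thus ?case using elim by (simp add: field_simps)
  qed
  have "(\<lambda>x. real N / real x) \<longlonglongrightarrow> 0"
    by (rule tendsto_divide_0[OF tendsto_const])
       (rule filterlim_at_top_imp_at_infinity[OF filterlim_real_sequentially])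
  thus "(\<lambda>x. 1 - real N / real x) \<longlonglongrightarrow> 1" using tendsto_diff[OF tendsto_const] by fastforce
qed simp

text \<open>Likewise for logarithmic density: the reciprocal sum over A up to x differs from
  harm x by at most the fixed sum C over the missing numbers.\<close>
lemma cofinite_log_density:
  assumes sub: "{1..} - A \<subseteq> {..<N}"
  shows "has_log_density A 1"
proof -
  define C where "C = (\<Sum>k\<in>{1..<N}. 1 / real k)"
  define R where "R x = (\<Sum>k\<in>{1..x} - A. 1 / real k)" for x
  have split: "(\<Sum>k\<in>A \<inter> {1..x}. 1 / real k) = harm x - R x" for x
  proof -
    have "harm x = (\<Sum>k\<in>{1..x}. 1 / real k)" by (simp add: harm_def inverse_eq_divide)
    also have "\<dots> = (\<Sum>k\<in>{1..x} \<inter> A. 1 / real k) + R x"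
      unfolding R_def by (rule sum.Int_Diff) simp
    finally show ?thesis by (simp add: Int_commute)
  qed
  have R: "0 \<le> R x" "R x \<le> C" for x
    unfolding C_def R_def using sub by (auto intro!: sum_nonneg sum_mono2)
  have "eventually (\<lambda>x. (harm x - C) / ln (real x) \<le> (harm x - R x) / ln (real x)
          \<and> (harm x - R x) / ln (real x) \<le> (harm x - 0) / ln (real x)) sequentially"
    using eventually_ge_at_top[of 2]
  proof eventually_elim
    case (elim x)
    hence "0 < ln (real x)" by simp
    thus ?case using R[of x] by (auto intro!: divide_right_mono)
  qed
  hence "(\<lambda>x. (harm x - R x) / ln (real x)) \<longlonglongrightarrow> 1"
    by (intro tendsto_sandwich[OF _ _ harm_shift_over_ln[of C] harm_shift_over_ln[of 0]])
       (auto elim: eventually_mono)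
  thus ?thesis unfolding has_log_density_def split .
qed

theorem proposition5p1:
  shows "liminf (\<lambda>n. ereal (D n)) = ereal (1/2) \<and>
         (\<forall>u::real. 0 \<le> u \<and> u < 1/2 \<longrightarrow>
           finite ({1..} - {n::nat. n \<ge> 1 \<and> D n > u})
         \<and> has_natural_density {n::nat. n \<ge> 1 \<and> D n > u} 1
         \<and> has_log_density {n::nat. n \<ge> 1 \<and> D n > u} 1)"
proof (intro conjI allI impI)
  show "liminf (\<lambda>n. ereal (D n)) = ereal (1/2)"
    using liminf_D_le_half liminf_D_ge_half by (rule antisym)
next
  fix u :: real assume "0 \<le> u \<and> u < 1/2"
  then obtain N where "\<forall>n\<ge>N. u < D n"
    using D_eventually_gt[of u] by (auto simp: eventually_sequentially)
  hence sub: "{1..} - {n::nat. n \<ge> 1 \<and> D n > u} \<subseteq> {..<N}" by (auto simp: not_less)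
  thus "finite ({1..} - {n::nat. n \<ge> 1 \<and> D n > u})" by (rule finite_subset) simp
  show "has_natural_density {n::nat. n \<ge> 1 \<and> D n > u} 1" by (rule cofinite_natural_density[OF sub])
  show "has_log_density {n::nat. n \<ge> 1 \<and> D n > u} 1" by (rule cofinite_log_density[OF sub])
qed

end
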